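(* Let $B$ be a non-abelian group, $H$ a finitely generated infinite group with fixed finite generating set $X=\{x_1,\dots,x_n\}$, $W=B\wr H$, and fix $a,b\in B$ with $ab\ne ba$. For $S\subseteq H$ define $\bar a,\bar b_S\in B^H$ by $\bar a(1)=a$, $\bar a(x)=1$ for $x\neq1$, and $\bar b_S(x)=b$ for $x\in S$, $\bar b_S(x)=1$ for $x\notin S$, and set $Y_S=(x_1,\dots,x_n,\bar a,\bar b_S)$. Let $S,T\in D_R(H)$ satisfy $S\cap \mathrm{Ball}_H(2r)=T\cap\mathrm{Ball}_H(2r)$ for some $r\in\mathbb N$. Then a word $w_S$ of length at most $r$ in the alphabet $Y_S^{\pm1}$ represents $1$ in $W$ if and only if the word $w_T$ in $Y_T^{\pm1}$ obtained from $w_S$ by replacing each occurrence of $\bar b_S^{\pm1}$ with $\bar b_T^{\pm1}$ represents $1$ in $W$.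
   Context: $B^H$ is the group of all functions $H\to B$ with pointwise multiplication; $B\wr H=B^H\rtimes H$ with $(hfh^{-1})(x)=f(h^{-1}x)$. $|h|_X$ denotes word length of $h\in H$ with respect to $X$ and $\mathrm{Ball}_H(m)=\{h\in H:|h|_X\le m\}$. $2^H$ is the space of all subsets of $H$ with the product topology; $H$ acts on it by right multiplication $S\mapsto Sh$, and $D_R(H)$ is the set of $S\subseteq H$ whose orbit $\{Sh:h\in H\}$ is dense in $2^H$. *)

theory Defs
  imports "HOL-Analysis.Analysis" "HOL-Algebra.Group" "HOL-Algebra.Generated_Groups"
begin

(* Elements are pairs (f, h) with f : carrier H \<rightarrow> carrier B (extensional) and h \<in> carrier H;
   (f,h)(g,k) = (f \<cdot> (h g h^-1), hk) where (h g h^-1)(x) = g(h^-1 x). *)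
definition wreath_prod :: "('b, 'c) monoid_scheme \<Rightarrow> ('h, 'd) monoid_scheme
    \<Rightarrow> (('h \<Rightarrow> 'b) \<times> 'h) monoid" where
  "wreath_prod B H =
     \<lparr> carrier = (carrier H \<rightarrow>\<^sub>E carrier B) \<times> carrier H,
       mult = (\<lambda>(f, h) (g, k).
                 (restrict (\<lambda>x. f x \<otimes>\<^bsub>B\<^esub> g (inv\<^bsub>H\<^esub> h \<otimes>\<^bsub>H\<^esub> x)) (carrier H),
                  h \<otimes>\<^bsub>H\<^esub> k)),
       one = (restrict (\<lambda>_. \<one>\<^bsub>B\<^esub>) (carrier H), \<one>\<^bsub>H\<^esub>) \<rparr>"

(* Evaluation in H of a word over X^{\<plusminus>1}; X given as list xs, a letter is (index, sign),
   sign True = x_i, False = x_i^{-1}. *)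
definition eval_H_word :: "('h, 'd) monoid_scheme \<Rightarrow> 'h list \<Rightarrow> (nat \<times> bool) list \<Rightarrow> 'h" where
  "eval_H_word H xs w =
     foldr (\<lambda>(i, e) acc. (if e then xs ! i else inv\<^bsub>H\<^esub> (xs ! i)) \<otimes>\<^bsub>H\<^esub> acc) w \<one>\<^bsub>H\<^esub>"

definition word_length :: "('h, 'd) monoid_scheme \<Rightarrow> 'h list \<Rightarrow> 'h \<Rightarrow> nat" where
  "word_length H xs h =
     (LEAST k. \<exists>w. length w = k \<and> (\<forall>(i, e) \<in> set w. i < length xs) \<and> eval_H_word H xs w = h)"

definition ball_H :: "('h, 'd) monoid_scheme \<Rightarrow> 'h list \<Rightarrow> nat \<Rightarrow> 'h set" where
  "ball_H H xs m = {h \<in> carrier H. word_length H xs h \<le> m}"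

(* 2^H with the product topology, subsets of H identified with their indicator functions
   carrier H \<rightarrow> bool (extensional), each factor {False, True} discrete. *)
definition subsets_topology :: "('h, 'd) monoid_scheme \<Rightarrow> ('h \<Rightarrow> bool) topology" where
  "subsets_topology H = product_topology (\<lambda>_. discrete_topology (UNIV :: bool set)) (carrier H)"

definition set_ind :: "('h, 'd) monoid_scheme \<Rightarrow> 'h set \<Rightarrow> ('h \<Rightarrow> bool)" where
  "set_ind H S = restrict (\<lambda>x. x \<in> S) (carrier H)"

definition right_transl :: "('h, 'd) monoid_scheme \<Rightarrow> 'h set \<Rightarrow> 'h \<Rightarrow> 'h set" where
  "right_transl H S h = (\<lambda>s. s \<otimes>\<^bsub>H\<^esub> h) ` S"

definition D_R :: "('h, 'd) monoid_scheme \<Rightarrow> 'h set set" where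
  "D_R H = {S. S \<subseteq> carrier H \<and>
     (subsets_topology H) closure_of {set_ind H (right_transl H S h) | h. h \<in> carrier H}
       = topspace (subsets_topology H)}"

(* The generating tuple Y_S = (x_1,..,x_n, abar, bbar_S), indexed 0..n+1 *)
definition Y_gen :: "('b, 'c) monoid_scheme \<Rightarrow> ('h, 'd) monoid_scheme \<Rightarrow> 'h list
    \<Rightarrow> 'b \<Rightarrow> 'b \<Rightarrow> 'h set \<Rightarrow> nat \<Rightarrow> ('h \<Rightarrow> 'b) \<times> 'h" where
  "Y_gen B H xs a b S i =
     (if i < length xs then (restrict (\<lambda>_. \<one>\<^bsub>B\<^esub>) (carrier H), xs ! i)
      else if i = length xs then
        (restrict (\<lambda>x. if x = \<one>\<^bsub>H\<^esub> then a else \<one>\<^bsub>B\<^esub>) (carrier H), \<one>\<^bsub>H\<^esub>)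
      else (restrict (\<lambda>x. if x \<in> S then b else \<one>\<^bsub>B\<^esub>) (carrier H), \<one>\<^bsub>H\<^esub>))"

definition eval_W_word :: "('b, 'c) monoid_scheme \<Rightarrow> ('h, 'd) monoid_scheme \<Rightarrow> 'h list
    \<Rightarrow> 'b \<Rightarrow> 'b \<Rightarrow> 'h set \<Rightarrow> (nat \<times> bool) list \<Rightarrow> ('h \<Rightarrow> 'b) \<times> 'h" where
  "eval_W_word B H xs a b S w =
     foldr (\<lambda>(i, e) acc.
        (if e then Y_gen B H xs a b S i else inv\<^bsub>wreath_prod B H\<^esub> (Y_gen B H xs a b S i))
          \<otimes>\<^bsub>wreath_prod B H\<^esub> acc) w \<one>\<^bsub>wreath_prod B H\<^esub>"

end

(* The value of a word w over Y_Z^{+-1} in B wr H is (f_Z, h), where h does not depend on Z and f_Z(x)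
   is a product over the letters of w: the abar-letters contribute nontrivially at x only if p x = 1
   for their site p, the bbar-letters only if p x is in Z. Sites are inverses of values of prefixes
   of w, so any two of them differ by an element of Ball(2 |w|).

   Suppose f_S = 1 and let x be in H. If S and T contain the same translates p x of bbar-sites p,
   then f_T(x) = f_S(x) = 1. Otherwise some p x lies outside Ball(2r), hence q x <> 1 for every
   abar-site q. As the right orbit of S is dense and H is infinite, there is y with p y in S iff
   p x in T for all bbar-sites p and with q y <> 1 for all abar-sites q; then f_T(x) = f_S(y) = 1.
   The converse is symmetric. Neither the non-commutativity of B nor the generation of H by X nor
   the bound on the letter indices is needed. *)

theory Submission
  imports Defs
begin

section \<open>Values of words in the wreath product\<close>

lemma group_wreath_prod:
  assumes B: "group B" and H: "group H"
  shows "group (wreath_prod B H)"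
proof -
  interpret B: group B by fact
  interpret H: group H by fact
  show ?thesis
  proof (rule groupI)
    fix x y assume "x \<in> carrier (wreath_prod B H)" "y \<in> carrier (wreath_prod B H)"
    then show "x \<otimes>\<^bsub>wreath_prod B H\<^esub> y \<in> carrier (wreath_prod B H)"
      by (cases x; cases y) (auto simp: wreath_prod_def PiE_iff)
  next
    show "\<one>\<^bsub>wreath_prod B H\<^esub> \<in> carrier (wreath_prod B H)"
      by (auto simp: wreath_prod_def)
  next
    fix x y z assume "x \<in> carrier (wreath_prod B H)" "y \<in> carrier (wreath_prod B H)"
      "z \<in> carrier (wreath_prod B H)"
    then show "x \<otimes>\<^bsub>wreath_prod B H\<^esub> y \<otimes>\<^bsub>wreath_prod B H\<^esub> z =
         x \<otimes>\<^bsub>wreath_prod B H\<^esub> (y \<otimes>\<^bsub>wreath_prod B H\<^esub> z)"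
      by (cases x; cases y; cases z)
        (auto simp: wreath_prod_def PiE_iff H.m_assoc B.m_assoc H.inv_mult_group intro!: restrict_ext)
  next
    fix x assume "x \<in> carrier (wreath_prod B H)"
    then show "\<one>\<^bsub>wreath_prod B H\<^esub> \<otimes>\<^bsub>wreath_prod B H\<^esub> x = x"
      by (cases x) (auto simp: wreath_prod_def PiE_iff intro!: extensionalityI[where A="carrier H"])
  next
    fix x assume "x \<in> carrier (wreath_prod B H)"
    then obtain f h where x: "x = (f, h)" "f \<in> carrier H \<rightarrow>\<^sub>E carrier B" "h \<in> carrier H"
      by (cases x) (auto simp: wreath_prod_def)
    let ?y = "(restrict (\<lambda>y. inv\<^bsub>B\<^esub> f (h \<otimes>\<^bsub>H\<^esub> y)) (carrier H), inv\<^bsub>H\<^esub> h)"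
    have "?y \<in> carrier (wreath_prod B H)" "?y \<otimes>\<^bsub>wreath_prod B H\<^esub> x = \<one>\<^bsub>wreath_prod B H\<^esub>"
      using x by (auto simp: wreath_prod_def PiE_iff H.m_assoc[symmetric] intro!: restrict_ext)
    then show "\<exists>y\<in>carrier (wreath_prod B H). y \<otimes>\<^bsub>wreath_prod B H\<^esub> x = \<one>\<^bsub>wreath_prod B H\<^esub>"
      by blast
  qed
qed

definition letter_top :: "('h, 'd) monoid_scheme \<Rightarrow> 'h list \<Rightarrow> nat \<times> bool \<Rightarrow> 'h" where
  "letter_top H xs l =
     (if fst l < length xs then (if snd l then xs ! fst l else inv\<^bsub>H\<^esub> (xs ! fst l)) else \<one>\<^bsub>H\<^esub>)"

definition letter_base :: "('b, 'c) monoid_scheme \<Rightarrow> ('h, 'd) monoid_scheme \<Rightarrow> 'h list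
    \<Rightarrow> 'b \<Rightarrow> 'b \<Rightarrow> 'h set \<Rightarrow> nat \<times> bool \<Rightarrow> 'h \<Rightarrow> 'b" where
  "letter_base B H xs a b Z l y =
     (if fst l < length xs then \<one>\<^bsub>B\<^esub>
      else if fst l = length xs then
        (if y = \<one>\<^bsub>H\<^esub> then (if snd l then a else inv\<^bsub>B\<^esub> a) else \<one>\<^bsub>B\<^esub>)
      else (if y \<in> Z then (if snd l then b else inv\<^bsub>B\<^esub> b) else \<one>\<^bsub>B\<^esub>))"

fun word_top :: "('h, 'd) monoid_scheme \<Rightarrow> 'h list \<Rightarrow> (nat \<times> bool) list \<Rightarrow> 'h" where
  "word_top H xs [] = \<one>\<^bsub>H\<^esub>"
| "word_top H xs (l # w) = letter_top H xs l \<otimes>\<^bsub>H\<^esub> word_top H xs w"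

fun word_base :: "('b, 'c) monoid_scheme \<Rightarrow> ('h, 'd) monoid_scheme \<Rightarrow> 'h list
    \<Rightarrow> 'b \<Rightarrow> 'b \<Rightarrow> 'h set \<Rightarrow> (nat \<times> bool) list \<Rightarrow> 'h \<Rightarrow> 'b" where
  "word_base B H xs a b Z [] x = \<one>\<^bsub>B\<^esub>"
| "word_base B H xs a b Z (l # w) x =
     letter_base B H xs a b Z l x \<otimes>\<^bsub>B\<^esub>
     word_base B H xs a b Z w (inv\<^bsub>H\<^esub> letter_top H xs l \<otimes>\<^bsub>H\<^esub> x)"

lemma letter_top_closed:
  assumes "group H" "set xs \<subseteq> carrier H"
  shows "letter_top H xs l \<in> carrier H"
proof -
  interpret H: group H by fact
  show ?thesis using assms(2) nth_mem by (fastforce simp: letter_top_def)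
qed

lemma word_top_closed:
  assumes "group H" "set xs \<subseteq> carrier H"
  shows "word_top H xs w \<in> carrier H"
proof -
  interpret H: group H by fact
  show ?thesis by (induction w) (simp_all add: letter_top_closed[OF assms])
qed

lemma letter_value:
  assumes B: "group B" and H: "group H" and xs: "set xs \<subseteq> carrier H"
    and a: "a \<in> carrier B" and b: "b \<in> carrier B"
  shows "(if snd l then Y_gen B H xs a b Z (fst l) else inv\<^bsub>wreath_prod B H\<^esub> Y_gen B H xs a b Z (fst l))
       = (restrict (letter_base B H xs a b Z l) (carrier H), letter_top H xs l)"
proof (cases "snd l")
  case True
  then show ?thesis
    by (auto simp: Y_gen_def letter_base_def letter_top_def intro!: restrict_ext)
next
  case False
  interpret B: group B by fact
  interpret H: group H by fact
  interpret W: group "wreath_prod B H" by (rule group_wreath_prod[OF B H])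
  have nth: "fst l < length xs \<Longrightarrow> xs ! fst l \<in> carrier H"
    using xs by auto
  have "Y_gen B H xs a b Z (fst l) \<in> carrier (wreath_prod B H)"
    using nth a b by (auto simp: Y_gen_def wreath_prod_def)
  moreover have "(restrict (letter_base B H xs a b Z l) (carrier H), letter_top H xs l)
      \<in> carrier (wreath_prod B H)"
    using a b letter_top_closed[OF H xs] by (auto simp: wreath_prod_def letter_base_def)
  moreover have "(restrict (letter_base B H xs a b Z l) (carrier H), letter_top H xs l)
      \<otimes>\<^bsub>wreath_prod B H\<^esub> Y_gen B H xs a b Z (fst l) = \<one>\<^bsub>wreath_prod B H\<^esub>"
    using False nth a b
    by (auto simp: Y_gen_def letter_base_def letter_top_def wreath_prod_def intro!: restrict_ext)
  ultimately show ?thesis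
    using False W.inv_equality by simp
qed

lemma eval_W_word_normal_form:
  assumes "group B" "group H" "set xs \<subseteq> carrier H" "a \<in> carrier B" "b \<in> carrier B"
  shows "eval_W_word B H xs a b Z w =
    (restrict (word_base B H xs a b Z w) (carrier H), word_top H xs w)"
proof (induction w)
  case Nil
  then show ?case by (simp add: eval_W_word_def wreath_prod_def restrict_def)
next
  case (Cons l w)
  interpret H: group H by fact
  have "eval_W_word B H xs a b Z (l # w) =
     (if snd l then Y_gen B H xs a b Z (fst l) else inv\<^bsub>wreath_prod B H\<^esub> Y_gen B H xs a b Z (fst l))
       \<otimes>\<^bsub>wreath_prod B H\<^esub> eval_W_word B H xs a b Z w"
    by (cases l) (simp add: eval_W_word_def)
  also have "\<dots> = (restrict (word_base B H xs a b Z (l # w)) (carrier H), word_top H xs (l # w))"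
    unfolding letter_value[OF assms] Cons
    using letter_top_closed[OF assms(2,3), of l] by (auto simp: wreath_prod_def intro!: restrict_ext)
  finally show ?case .
qed

lemma eval_W_word_eq_one_iff:
  assumes "group B" "group H" "set xs \<subseteq> carrier H" "a \<in> carrier B" "b \<in> carrier B"
  shows "eval_W_word B H xs a b Z w = \<one>\<^bsub>wreath_prod B H\<^esub> \<longleftrightarrow>
    (\<forall>x\<in>carrier H. word_base B H xs a b Z w x = \<one>\<^bsub>B\<^esub>) \<and> word_top H xs w = \<one>\<^bsub>H\<^esub>"
  unfolding eval_W_word_normal_form[OF assms] by (auto simp: wreath_prod_def) (metis restrict_apply')+

section \<open>Sites of a word\<close>

text \<open>\<open>p \<in> sites H xs P w\<close> iff \<open>p = h\<^sup>-\<^sup>1\<close> for the top component \<open>h\<close> of a prefix of \<open>w\<close>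
  that is followed by a letter satisfying \<open>P\<close>: such a letter contributes to the base component
  of the value of \<open>w\<close> at \<open>x\<close> only through \<open>p \<otimes> x\<close>.\<close>

fun sites :: "('h, 'd) monoid_scheme \<Rightarrow> 'h list \<Rightarrow> (nat \<times> bool \<Rightarrow> bool)
    \<Rightarrow> (nat \<times> bool) list \<Rightarrow> 'h set" where
  "sites H xs P [] = {}"
| "sites H xs P (l # w) = (if P l then {\<one>\<^bsub>H\<^esub>} else {}) \<union>
     (\<lambda>p. p \<otimes>\<^bsub>H\<^esub> inv\<^bsub>H\<^esub> letter_top H xs l) ` sites H xs P w"

abbreviation a_sites :: "('h, 'd) monoid_scheme \<Rightarrow> 'h list \<Rightarrow> (nat \<times> bool) list \<Rightarrow> 'h set" where
  "a_sites H xs \<equiv> sites H xs (\<lambda>l. fst l = length xs)"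

abbreviation b_sites :: "('h, 'd) monoid_scheme \<Rightarrow> 'h list \<Rightarrow> (nat \<times> bool) list \<Rightarrow> 'h set" where
  "b_sites H xs \<equiv> sites H xs (\<lambda>l. length xs < fst l)"

lemma finite_sites: "finite (sites H xs P w)"
  by (induction w) auto

lemma mem_sitesD:
  assumes "group H" "set xs \<subseteq> carrier H" "p \<in> sites H xs P w"
  shows "\<exists>j<length w. p = inv\<^bsub>H\<^esub> word_top H xs (take j w)"
  using assms(3)
proof (induction w arbitrary: p)
  case Nil
  then show ?case by simp
next
  case (Cons l w)
  interpret H: group H by fact
  consider "p = \<one>\<^bsub>H\<^esub>" | q where "q \<in> sites H xs P w" "p = q \<otimes>\<^bsub>H\<^esub> inv\<^bsub>H\<^esub> letter_top H xs l"
    using Cons.prems by (auto split: if_splits)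
  then show ?case
  proof cases
    case 1
    then show ?thesis by (intro exI[of _ 0]) simp
  next
    case 2
    then obtain j where "j < length w" "q = inv\<^bsub>H\<^esub> word_top H xs (take j w)"
      using Cons.IH by blast
    with 2 show ?thesis
      using letter_top_closed[OF assms(1,2)] word_top_closed[OF assms(1,2)]
      by (intro exI[of _ "Suc j"]) (simp add: H.inv_mult_group)
  qed
qed

lemma sites_closed:
  assumes "group H" "set xs \<subseteq> carrier H"
  shows "sites H xs P w \<subseteq> carrier H"
  using mem_sitesD[OF assms] word_top_closed[OF assms] group.inv_closed[OF assms(1)]
  by blast

lemma word_base_cong:
  assumes H: "group H" and xs: "set xs \<subseteq> carrier H"
    and "x \<in> carrier H" "y \<in> carrier H"
    and "\<forall>p\<in>b_sites H xs w. p \<otimes>\<^bsub>H\<^esub> x \<in> Z1 \<longleftrightarrow> p \<otimes>\<^bsub>H\<^esub> y \<in> Z2"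
    and "\<forall>p\<in>a_sites H xs w. p \<otimes>\<^bsub>H\<^esub> x = \<one>\<^bsub>H\<^esub> \<longleftrightarrow> p \<otimes>\<^bsub>H\<^esub> y = \<one>\<^bsub>H\<^esub>"
  shows "word_base B H xs a b Z1 w x = word_base B H xs a b Z2 w y"
  using assms(3-)
proof (induction w arbitrary: x y)
  case Nil
  then show ?case by simp
next
  case (Cons l w)
  interpret H: group H by fact
  let ?t = "letter_top H xs l"
  have t: "?t \<in> carrier H" by (rule letter_top_closed[OF H xs])
  have sites: "\<And>P. sites H xs P w \<subseteq> carrier H" by (rule sites_closed[OF H xs])
  have "letter_base B H xs a b Z1 l x = letter_base B H xs a b Z2 l y"
    using Cons.prems by (auto simp: letter_base_def)
  moreover have "word_base B H xs a b Z1 w (inv\<^bsub>H\<^esub> ?t \<otimes>\<^bsub>H\<^esub> x)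
      = word_base B H xs a b Z2 w (inv\<^bsub>H\<^esub> ?t \<otimes>\<^bsub>H\<^esub> y)"
  proof (rule Cons.IH)
    have shift: "p \<otimes>\<^bsub>H\<^esub> (inv\<^bsub>H\<^esub> ?t \<otimes>\<^bsub>H\<^esub> z) = (p \<otimes>\<^bsub>H\<^esub> inv\<^bsub>H\<^esub> ?t) \<otimes>\<^bsub>H\<^esub> z"
      if "p \<in> sites H xs P w" "z \<in> carrier H" for P p z
      using that t sites by (simp add: H.m_assoc subset_iff)
    have step: "p \<otimes>\<^bsub>H\<^esub> inv\<^bsub>H\<^esub> ?t \<in> sites H xs P (l # w)" if "p \<in> sites H xs P w" for P p
      using that by simp
    show "\<forall>p\<in>b_sites H xs w. p \<otimes>\<^bsub>H\<^esub> (inv\<^bsub>H\<^esub> ?t \<otimes>\<^bsub>H\<^esub> x) \<in> Z1 \<longleftrightarrow>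
        p \<otimes>\<^bsub>H\<^esub> (inv\<^bsub>H\<^esub> ?t \<otimes>\<^bsub>H\<^esub> y) \<in> Z2"
      using Cons.prems(1,2) Cons.prems(3)[rule_format, OF step] by (simp add: shift)
    show "\<forall>p\<in>a_sites H xs w. p \<otimes>\<^bsub>H\<^esub> (inv\<^bsub>H\<^esub> ?t \<otimes>\<^bsub>H\<^esub> x) = \<one>\<^bsub>H\<^esub> \<longleftrightarrow>
        p \<otimes>\<^bsub>H\<^esub> (inv\<^bsub>H\<^esub> ?t \<otimes>\<^bsub>H\<^esub> y) = \<one>\<^bsub>H\<^esub>"
      using Cons.prems(1,2) Cons.prems(4)[rule_format, OF step] by (simp add: shift)
  qed (use Cons.prems t in auto)
  ultimately show ?case by simp
qed

lemma eval_H_word_Nil: "eval_H_word H xs [] = \<one>\<^bsub>H\<^esub>"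
  by (simp add: eval_H_word_def)

lemma eval_H_word_Cons:
  "fst l < length xs \<Longrightarrow> eval_H_word H xs (l # u) = letter_top H xs l \<otimes>\<^bsub>H\<^esub> eval_H_word H xs u"
  by (cases l) (simp add: eval_H_word_def letter_top_def)

lemma eval_H_word_closed:
  assumes "group H" "set xs \<subseteq> carrier H" "\<forall>l\<in>set u. fst l < length xs"
  shows "eval_H_word H xs u \<in> carrier H"
  using assms(3)
proof (induction u)
  case Nil
  then show ?case using group.is_monoid[OF assms(1)] by (simp add: eval_H_word_Nil)
next
  case (Cons l u)
  then show ?case
    using letter_top_closed[OF assms(1,2)] group.is_monoid[OF assms(1)]
    by (simp add: eval_H_word_Cons monoid.m_closed)
qed

lemma eval_H_word_append:
  assumes H: "group H" and xs: "set xs \<subseteq> carrier H"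
    and "\<forall>l\<in>set u. fst l < length xs" "\<forall>l\<in>set v. fst l < length xs"
  shows "eval_H_word H xs (u @ v) = eval_H_word H xs u \<otimes>\<^bsub>H\<^esub> eval_H_word H xs v"
  using assms(3)
proof (induction u)
  case Nil
  interpret H: group H by fact
  show ?case using eval_H_word_closed[OF H xs assms(4)] by (simp add: eval_H_word_Nil)
next
  case (Cons l u)
  interpret H: group H by fact
  show ?case
    using Cons letter_top_closed[OF H xs] eval_H_word_closed[OF H xs] assms(4)
    by (simp add: eval_H_word_Cons H.m_assoc)
qed

definition inverse_word :: "(nat \<times> bool) list \<Rightarrow> (nat \<times> bool) list" where
  "inverse_word u = rev (map (\<lambda>(i, e). (i, \<not> e)) u)"

lemma eval_H_word_inverse_word:
  assumes H: "group H" and xs: "set xs \<subseteq> carrier H" and "\<forall>l\<in>set u. fst l < length xs"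
  shows "eval_H_word H xs (inverse_word u) = inv\<^bsub>H\<^esub> eval_H_word H xs u"
  using assms(3)
proof (induction u)
  case Nil
  interpret H: group H by fact
  show ?case by (simp add: inverse_word_def eval_H_word_Nil)
next
  case (Cons l u)
  interpret H: group H by fact
  obtain i e where l: "l = (i, e)" by fastforce
  have i: "i < length xs" and u: "\<forall>l\<in>set u. fst l < length xs"
    using Cons.prems l by auto
  have "xs ! i \<in> carrier H" using i xs by auto
  then have "eval_H_word H xs [(i, \<not> e)] = inv\<^bsub>H\<^esub> letter_top H xs l"
    using i by (simp add: l eval_H_word_def letter_top_def)
  moreover have "\<forall>l\<in>set (inverse_word u). fst l < length xs"
    using u by (auto simp: inverse_word_def)
  ultimately show ?case
    using Cons.IH[OF u] i u l letter_top_closed[OF H xs] eval_H_word_closed[OF H xs u]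
    by (simp add: inverse_word_def eval_H_word_append[OF H xs] eval_H_word_Cons H.inv_mult_group)
qed

lemma word_top_eq_eval_H_word:
  assumes H: "group H" and xs: "set xs \<subseteq> carrier H"
  shows "word_top H xs w = eval_H_word H xs (filter (\<lambda>l. fst l < length xs) w)"
proof (induction w)
  case Nil
  then show ?case by (simp add: eval_H_word_Nil)
next
  case (Cons l w)
  interpret H: group H by fact
  show ?case
    using Cons eval_H_word_closed[OF H xs, of "filter (\<lambda>l. fst l < length xs) w"]
    by (simp add: eval_H_word_Cons) (simp add: letter_top_def)
qed

lemma word_length_eval_H_word_le:
  assumes "\<forall>l\<in>set u. fst l < length xs"
  shows "word_length H xs (eval_H_word H xs u) \<le> length u"
  unfolding word_length_def by (rule Least_le, rule exI[of _ u]) (use assms in auto)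

lemma ball_H_mono: "m \<le> n \<Longrightarrow> ball_H H xs m \<subseteq> ball_H H xs n"
  by (auto simp: ball_H_def)

lemma sites_quotient_in_ball_H:
  assumes H: "group H" and xs: "set xs \<subseteq> carrier H"
    and "p \<in> sites H xs P w" "q \<in> sites H xs Q w"
  shows "p \<otimes>\<^bsub>H\<^esub> inv\<^bsub>H\<^esub> q \<in> ball_H H xs (2 * length w)"
proof -
  interpret H: group H by fact
  obtain i j where ij: "i < length w" "j < length w"
    and p: "p = inv\<^bsub>H\<^esub> word_top H xs (take i w)" and q: "q = inv\<^bsub>H\<^esub> word_top H xs (take j w)"
    using mem_sitesD[OF H xs] assms(3,4) by metis
  define u\<^sub>i where "u\<^sub>i = filter (\<lambda>l. fst l < length xs) (take i w)"
  define u\<^sub>j where "u\<^sub>j = filter (\<lambda>l. fst l < length xs) (take j w)"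
  have valid: "\<forall>l\<in>set u\<^sub>i. fst l < length xs" "\<forall>l\<in>set u\<^sub>j. fst l < length xs"
    "\<forall>l\<in>set (inverse_word u\<^sub>i). fst l < length xs"
    by (auto simp: u\<^sub>i_def u\<^sub>j_def inverse_word_def)
  have "eval_H_word H xs (inverse_word u\<^sub>i @ u\<^sub>j) = inv\<^bsub>H\<^esub> eval_H_word H xs u\<^sub>i \<otimes>\<^bsub>H\<^esub> eval_H_word H xs u\<^sub>j"
    using valid by (simp add: eval_H_word_append[OF H xs] eval_H_word_inverse_word[OF H xs])
  also have "\<dots> = p \<otimes>\<^bsub>H\<^esub> inv\<^bsub>H\<^esub> q"
    using word_top_closed[OF H xs]
    by (simp add: p q u\<^sub>i_def u\<^sub>j_def word_top_eq_eval_H_word[OF H xs])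
  finally have "word_length H xs (p \<otimes>\<^bsub>H\<^esub> inv\<^bsub>H\<^esub> q) \<le> length (inverse_word u\<^sub>i @ u\<^sub>j)"
    using word_length_eval_H_word_le valid by (metis Un_iff set_append)
  also have "\<dots> \<le> 2 * length w"
    using ij length_filter_le[of "\<lambda>l. fst l < length xs" "take i w"]
      length_filter_le[of "\<lambda>l. fst l < length xs" "take j w"]
    by (simp add: inverse_word_def u\<^sub>i_def u\<^sub>j_def)
  finally show ?thesis
    using p q word_top_closed[OF H xs] by (simp add: ball_H_def)
qed

section \<open>Sets with dense right orbit\<close>

lemma mem_right_transl_iff:
  assumes "group H" "S \<subseteq> carrier H" "p \<in> carrier H" "h \<in> carrier H"
  shows "p \<in> right_transl H S h \<longleftrightarrow> p \<otimes>\<^bsub>H\<^esub> inv\<^bsub>H\<^esub> h \<in> S"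
proof -
  interpret H: group H by fact
  have "p \<in> right_transl H S h \<longleftrightarrow> (\<exists>s\<in>S. p = s \<otimes>\<^bsub>H\<^esub> h)"
    by (auto simp: right_transl_def)
  also have "\<dots> \<longleftrightarrow> (\<exists>s\<in>S. p \<otimes>\<^bsub>H\<^esub> inv\<^bsub>H\<^esub> h = s)"
    using assms(2) H.inv_solve_right'[OF _ assms(3,4)] by blast
  finally show ?thesis by blast
qed

lemma D_R_right_transl_pattern:
  assumes "S \<in> D_R H" "finite F" "F \<subseteq> carrier H"
  shows "\<exists>h\<in>carrier H. \<forall>p\<in>F. p \<in> right_transl H S h \<longleftrightarrow> p \<in> P"
proof -
  let ?X = "subsets_topology H"
  define U where "U = (\<lambda>i. if i \<in> F then {i \<in> P} else (UNIV :: bool set))"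
  have "{i \<in> carrier H. U i \<noteq> topspace (discrete_topology UNIV)} \<subseteq> F"
    by (auto simp: U_def)
  then have "openin ?X (PiE (carrier H) U)"
    unfolding subsets_topology_def openin_PiE_gen
    using assms(2) finite_subset by (auto simp: U_def)
  moreover have "set_ind H P \<in> PiE (carrier H) U"
    by (auto simp: set_ind_def U_def)
  moreover have "set_ind H P \<in> ?X closure_of {set_ind H (right_transl H S h) | h. h \<in> carrier H}"
    using assms(1) by (simp add: D_R_def subsets_topology_def set_ind_def)
  ultimately obtain h where h: "h \<in> carrier H" "set_ind H (right_transl H S h) \<in> PiE (carrier H) U"
    unfolding in_closure_of by blast
  have "p \<in> right_transl H S h \<longleftrightarrow> p \<in> P" if "p \<in> F" for p
  proof -
    have "p \<in> carrier H" using that assms(3) by blast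
    with PiE_mem[OF h(2) this] that show ?thesis by (simp add: set_ind_def U_def)
  qed
  with h(1) show ?thesis by blast
qed

lemma D_R_pattern_avoiding:
  assumes H: "group H" and S: "S \<in> D_R H" and inf: "infinite (carrier H)"
    and "finite A" "finite F" "F \<subseteq> carrier H"
  shows "\<exists>y\<in>carrier H. y \<notin> A \<and> (\<forall>p\<in>F. p \<otimes>\<^bsub>H\<^esub> y \<in> S \<longleftrightarrow> p \<in> P)"
  using assms(4-)
proof (induction A arbitrary: F P rule: finite_induct)
  case empty
  interpret H: group H by fact
  obtain h where h: "h \<in> carrier H" "\<forall>p\<in>F. p \<in> right_transl H S h \<longleftrightarrow> p \<in> P"
    using D_R_right_transl_pattern[OF S empty.prems] by blast
  have "S \<subseteq> carrier H" using S by (simp add: D_R_def)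
  moreover have "p \<in> carrier H" if "p \<in> F" for p using that empty.prems(2) by blast
  ultimately have "p \<otimes>\<^bsub>H\<^esub> inv\<^bsub>H\<^esub> h \<in> S \<longleftrightarrow> p \<in> P" if "p \<in> F" for p
    using h(2) that mem_right_transl_iff[OF H _ _ h(1)] by blast
  with h(1) show ?case by (intro bexI[of _ "inv\<^bsub>H\<^esub> h"]) auto
next
  case (insert y0 A)
  text \<open>Prescribing at a fresh point \<open>z\<close> the opposite of what \<open>y0\<close> gives there rules out \<open>y = y0\<close>.\<close>
  obtain z where z: "z \<in> carrier H" "z \<notin> F"
    using infinite_imp_nonempty[OF Diff_infinite_finite[OF insert.prems(1) inf]] by blast
  define P' where "P' = P - {z} \<union> {z'. z' = z \<and> z \<otimes>\<^bsub>H\<^esub> y0 \<notin> S}"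
  obtain y where y: "y \<in> carrier H" "y \<notin> A" "\<forall>p\<in>insert z F. p \<otimes>\<^bsub>H\<^esub> y \<in> S \<longleftrightarrow> p \<in> P'"
    using insert.IH[of "insert z F" P'] insert.prems z by auto
  then have "z \<otimes>\<^bsub>H\<^esub> y \<in> S \<longleftrightarrow> z \<otimes>\<^bsub>H\<^esub> y0 \<notin> S"
    by (simp add: P'_def)
  then have "y \<noteq> y0" by blast
  moreover have "\<forall>p\<in>F. p \<otimes>\<^bsub>H\<^esub> y \<in> S \<longleftrightarrow> p \<in> P"
    using y(3) z(2) by (auto simp: P'_def)
  ultimately show ?case using y(1,2) by blast
qed

section \<open>Transfer of relations\<close>

lemma sites_mult_ne_one:
  assumes H: "group H" and xs: "set xs \<subseteq> carrier H"
    and p: "p \<in> sites H xs P w" and q: "q \<in> sites H xs Q w" and x: "x \<in> carrier H"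
    and far: "p \<otimes>\<^bsub>H\<^esub> x \<notin> ball_H H xs (2 * length w)"
  shows "q \<otimes>\<^bsub>H\<^esub> x \<noteq> \<one>\<^bsub>H\<^esub>"
proof
  interpret H: group H by fact
  assume qx: "q \<otimes>\<^bsub>H\<^esub> x = \<one>\<^bsub>H\<^esub>"
  have "q \<in> carrier H" using q sites_closed[OF H xs] by blast
  then have "inv\<^bsub>H\<^esub> q = x" using H.inv_equality[OF H.inv_comm[OF qx] _ x] x by blast
  then show False using sites_quotient_in_ball_H[OF H xs p q] far by simp
qed

lemma word_base_at_far_point:
  assumes H: "group H" and xs: "set xs \<subseteq> carrier H" and inf: "infinite (carrier H)"
    and S: "S \<in> D_R H" and x: "x \<in> carrier H"
    and p: "p \<in> b_sites H xs w" and far: "p \<otimes>\<^bsub>H\<^esub> x \<notin> ball_H H xs (2 * length w)"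
  shows "\<exists>y\<in>carrier H. word_base B H xs a b T w x = word_base B H xs a b S w y"
proof -
  interpret H: group H by fact
  have a_closed: "a_sites H xs w \<subseteq> carrier H" and b_closed: "b_sites H xs w \<subseteq> carrier H"
    by (rule sites_closed[OF H xs])+
  have "finite ((\<lambda>q. inv\<^bsub>H\<^esub> q) ` a_sites H xs w)"
    by (simp add: finite_sites)
  from D_R_pattern_avoiding[OF H S inf this finite_sites b_closed, where P = "{p. p \<otimes>\<^bsub>H\<^esub> x \<in> T}"]
  obtain y where y: "y \<in> carrier H" "y \<notin> (\<lambda>q. inv\<^bsub>H\<^esub> q) ` a_sites H xs w"
    "\<forall>p\<in>b_sites H xs w. p \<otimes>\<^bsub>H\<^esub> y \<in> S \<longleftrightarrow> p \<otimes>\<^bsub>H\<^esub> x \<in> T"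
    by auto
  have "q \<otimes>\<^bsub>H\<^esub> y \<noteq> \<one>\<^bsub>H\<^esub>" if q: "q \<in> a_sites H xs w" for q
  proof
    assume qy: "q \<otimes>\<^bsub>H\<^esub> y = \<one>\<^bsub>H\<^esub>"
    have "q \<in> carrier H" using q a_closed by blast
    then have "inv\<^bsub>H\<^esub> q = y" using H.inv_equality[OF H.inv_comm[OF qy] _ y(1)] y(1) by blast
    with q y(2) show False by blast
  qed
  moreover have "q \<otimes>\<^bsub>H\<^esub> x \<noteq> \<one>\<^bsub>H\<^esub>" if "q \<in> a_sites H xs w" for q
    by (rule sites_mult_ne_one[OF H xs p that x far])
  ultimately have "word_base B H xs a b T w x = word_base B H xs a b S w y"
    using y(3) by (intro word_base_cong[OF H xs x y(1)]) auto
  with y(1) show ?thesis by blast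
qed

lemma word_base_one_transfer:
  assumes H: "group H" and xs: "set xs \<subseteq> carrier H" and inf: "infinite (carrier H)"
    and S: "S \<in> D_R H"
    and ST: "S \<inter> ball_H H xs (2 * r) = T \<inter> ball_H H xs (2 * r)" and len: "length w \<le> r"
    and one: "\<forall>x\<in>carrier H. word_base B H xs a b S w x = \<one>\<^bsub>B\<^esub>"
    and x: "x \<in> carrier H"
  shows "word_base B H xs a b T w x = \<one>\<^bsub>B\<^esub>"
proof (cases "\<forall>p\<in>b_sites H xs w. p \<otimes>\<^bsub>H\<^esub> x \<in> T \<longleftrightarrow> p \<otimes>\<^bsub>H\<^esub> x \<in> S")
  case True
  then have "word_base B H xs a b T w x = word_base B H xs a b S w x"
    by (intro word_base_cong[OF H xs x x]) auto
  with one x show ?thesis by simp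
next
  case False
  then obtain p where p: "p \<in> b_sites H xs w" "\<not> (p \<otimes>\<^bsub>H\<^esub> x \<in> T \<longleftrightarrow> p \<otimes>\<^bsub>H\<^esub> x \<in> S)"
    by blast
  then have "p \<otimes>\<^bsub>H\<^esub> x \<notin> ball_H H xs (2 * r)"
    using ST by (metis Int_iff)
  moreover have "ball_H H xs (2 * length w) \<subseteq> ball_H H xs (2 * r)"
    using len by (intro ball_H_mono) simp
  ultimately obtain y where "y \<in> carrier H" "word_base B H xs a b T w x = word_base B H xs a b S w y"
    using word_base_at_far_point[OF H xs inf S x p(1)] by (meson subsetD)
  with one show ?thesis by simp
qed

theorem lemma3p5:
  fixes B :: "('b, 'c) monoid_scheme" and H :: "('h, 'd) monoid_scheme"
    and xs :: "'h list" and a b :: 'b and S T :: "'h set" and r :: nat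
    and w :: "(nat \<times> bool) list"
  assumes "group B" and "group H"
    and "\<not> (\<forall>x\<in>carrier B. \<forall>y\<in>carrier B. x \<otimes>\<^bsub>B\<^esub> y = y \<otimes>\<^bsub>B\<^esub> x)"
    and "set xs \<subseteq> carrier H" and "generate H (set xs) = carrier H"
    and "infinite (carrier H)"
    and "a \<in> carrier B" and "b \<in> carrier B" and "a \<otimes>\<^bsub>B\<^esub> b \<noteq> b \<otimes>\<^bsub>B\<^esub> a"
    and "S \<in> D_R H" and "T \<in> D_R H"
    and "S \<inter> ball_H H xs (2 * r) = T \<inter> ball_H H xs (2 * r)"
    and "length w \<le> r" and "\<forall>(i, e) \<in> set w. i < length xs + 2"
  shows "eval_W_word B H xs a b S w = \<one>\<^bsub>wreath_prod B H\<^esub> \<longleftrightarrow>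
         eval_W_word B H xs a b T w = \<one>\<^bsub>wreath_prod B H\<^esub>"
proof -
  have transfer: "eval_W_word B H xs a b Z2 w = \<one>\<^bsub>wreath_prod B H\<^esub>"
    if "Z1 \<in> D_R H" "Z1 \<inter> ball_H H xs (2 * r) = Z2 \<inter> ball_H H xs (2 * r)"
      and "eval_W_word B H xs a b Z1 w = \<one>\<^bsub>wreath_prod B H\<^esub>" for Z1 Z2
    using that word_base_one_transfer[OF assms(2,4,6) that(1,2) assms(13)]
    by (auto simp: eval_W_word_eq_one_iff[OF assms(1,2,4,7,8)])
  show ?thesis
    using transfer[of S T] transfer[of T S] assms(10-12) by metis
qed

end
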